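(* Let $T$ be a compact metric space, let $\eta$ be a sample-continuous max-infinitely divisible process on $T$ with vertex function identically $0$ and exponent measure $\mu$, and $\Phi=\sum_{i=1}^N\delta_{\phi_i}$ a Poisson random measure on $\mathbb{C}_0$ with intensity $\mu$, defined on $(\Omega,\mathcal F,\mathbb P)$ with a measurable enumeration $(\phi_i)$ of its atoms, such that $\eta=\max(\Phi)$. Let $K\subset T$ be closed. Then $\Phi_K^+=\sum_{i=1}^N1_{\{\phi_i\not<_K\eta\}}\delta_{\phi_i}$ and $\Phi_K^-=\sum_{i=1}^N1_{\{\phi_i<_K\eta\}}\delta_{\phi_i}$ are measurable maps from $(\Omega,\mathcal F)$ to $(M_p(\mathbb{C}_0),\mathcal M_p)$.
   Context: $\mathbb{C}_0$ is the set of continuous $f:T\to[0,\infty)$ not identically zero (sup norm). $M_p(\mathbb{C}_0)$ is the set of point measures $\sum_{i\in I}\delta_{f_i}$ on $\mathbb{C}_0$ with $\{i:\|f_i\|>\varepsilon\}$ finite for all $\varepsilon>0$, and $\mathcal M_p$ is the $\sigma$-algebra generated by $M\mapsto M(A)$, $A$ Borel. $\max(\Phi)(s)=\max\{\phi_i(s)\}$ ($0$ if $N=0$). The vertex function is $h(t)=\sup\{x:\mathbb P(\eta(t)\ge x)=1\}$; $\mu$ is a Borel measure on $\mathbb{C}_0$ with $\mu(\{\|f\|>\varepsilon\})<\infty$ for all $\varepsilon>0$ and $\mathbb P[\eta(K_i)<x_i,i\le n]=\exp[-\mu(\cup_i\{f(K_i)\ge x_i\})]$. $f<_Kg$ means $f(s)<g(s)$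 for all $s\in K$, and $f\not<_Kg$ its negation. *)

theory Defs
  imports "HOL-Probability.Probability"
begin

text \<open>The space C_0: continuous nonnegative functions on the compact metric space T
  (the type 't), not identically zero, with the sup norm (type of bounded continuous
  functions; on a compact space every continuous function is bounded).\<close>
definition C0 :: "('t::metric_space \<Rightarrow>\<^sub>C real) set" where
  "C0 = {f. (\<forall>s. 0 \<le> apply_bcontfun f s) \<and> f \<noteq> 0}"

definition C0M :: "('t::metric_space \<Rightarrow>\<^sub>C real) measure" where
  "C0M = restrict_space borel C0"

definition pm :: "(nat \<Rightarrow> 'b) \<Rightarrow> nat set \<Rightarrow> 'b set \<Rightarrow> ennreal" where
  "pm f I = (\<lambda>A. \<integral>\<^sup>+ i. indicator A (f i) \<partial>count_space I)"

text \<open>M_p(C_0): point measures sum_{i in I} delta_{f_i} on C_0 with only finitely many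
  atoms of norm > eps for every eps > 0 (such index sets are countable, so we
  index by subsets of nat).\<close>
definition Mp_space :: "(('t::metric_space \<Rightarrow>\<^sub>C real) set \<Rightarrow> ennreal) set" where
  "Mp_space = {M. \<exists>f I. (\<forall>i\<in>I. f i \<in> C0) \<and>
       (\<forall>\<epsilon>>0. finite {i\<in>I. \<epsilon> < norm (f i)}) \<and> M = pm f I}"

definition Mp :: "(('t::metric_space \<Rightarrow>\<^sub>C real) set \<Rightarrow> ennreal) measure" where
  "Mp = sigma Mp_space
     {{M \<in> Mp_space. M A \<in> B} | A B. A \<in> sets (C0M :: ('t \<Rightarrow>\<^sub>C real) measure) \<and> B \<in> sets (borel :: ennreal measure)}"

definition idx :: "enat \<Rightarrow> nat set" where
  "idx n = {i. 1 \<le> i \<and> enat i \<le> n}"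

definition cnt :: "(nat \<Rightarrow> 'w \<Rightarrow> 'b) \<Rightarrow> ('w \<Rightarrow> enat) \<Rightarrow> 'b set \<Rightarrow> 'w \<Rightarrow> ennreal" where
  "cnt \<phi> N A \<omega> = pm (\<lambda>i. \<phi> i \<omega>) (idx (N \<omega>)) A"

definition poisson_random_measure ::
  "'w measure \<Rightarrow> ('t::metric_space \<Rightarrow>\<^sub>C real) measure \<Rightarrow> ('w \<Rightarrow> enat) \<Rightarrow> (nat \<Rightarrow> 'w \<Rightarrow> ('t \<Rightarrow>\<^sub>C real)) \<Rightarrow> bool"
where
  "poisson_random_measure P \<mu> N \<phi> \<longleftrightarrow>
     (\<forall>\<omega>\<in>space P. \<forall>i\<in>idx (N \<omega>). \<phi> i \<omega> \<in> C0) \<and>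
     (\<forall>\<omega>\<in>space P. \<forall>\<epsilon>>0. finite {i\<in>idx (N \<omega>). \<epsilon> < norm (\<phi> i \<omega>)}) \<and>
     (\<forall>A\<in>sets C0M. cnt \<phi> N A \<in> borel_measurable P \<and>
        (if emeasure \<mu> A = \<infinity> then AE \<omega> in P. cnt \<phi> N A \<omega> = \<infinity>
         else (\<forall>k::nat. measure P {\<omega>\<in>space P. cnt \<phi> N A \<omega> = of_nat k}
                = exp (- measure \<mu> A) * measure \<mu> A ^ k / fact k))) \<and>
     (\<forall>(A::nat \<Rightarrow> ('t \<Rightarrow>\<^sub>C real) set) n. (\<forall>j<n. A j \<in> sets C0M) \<longrightarrow> disjoint_family_on A {..<n} \<longrightarrow>
        prob_space.indep_vars P (\<lambda>_. borel) (\<lambda>j. cnt \<phi> N (A j)) {..<n})"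

definition maxPhi :: "(nat \<Rightarrow> 'w \<Rightarrow> ('t::metric_space \<Rightarrow>\<^sub>C real)) \<Rightarrow> ('w \<Rightarrow> enat) \<Rightarrow> 'w \<Rightarrow> 't \<Rightarrow> real" where
  "maxPhi \<phi> N \<omega> s = (if idx (N \<omega>) = {} then 0 else Sup ((\<lambda>i. apply_bcontfun (\<phi> i \<omega>) s) ` idx (N \<omega>)))"

definition supK :: "('t::metric_space \<Rightarrow>\<^sub>C real) \<Rightarrow> 't set \<Rightarrow> real" where
  "supK f K = Sup (apply_bcontfun f ` K)"

definition vertex :: "'w measure \<Rightarrow> ('w \<Rightarrow> ('t::metric_space \<Rightarrow>\<^sub>C real)) \<Rightarrow> 't \<Rightarrow> real" where
  "vertex P \<eta> t = Sup {x. prob_space.prob P {\<omega>\<in>space P. x \<le> apply_bcontfun (\<eta> \<omega>) t} = 1}"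

definition max_id :: "'w measure \<Rightarrow> ('w \<Rightarrow> ('t::metric_space \<Rightarrow>\<^sub>C real)) \<Rightarrow> bool" where
  "max_id P \<eta> \<longleftrightarrow> (\<forall>n::nat. 1 \<le> n \<longrightarrow>
     (\<exists>Q::('t \<Rightarrow>\<^sub>C real) measure. sets Q = sets borel \<and> prob_space Q \<and>
        (\<lambda>g. Bcontfun (\<lambda>s. Max ((\<lambda>i. apply_bcontfun (g i) s) ` {..<n}))) \<in> measurable (PiM {..<n} (\<lambda>_. Q)) borel \<and>
        distr (PiM {..<n} (\<lambda>_. Q)) borel (\<lambda>g. Bcontfun (\<lambda>s. Max ((\<lambda>i. apply_bcontfun (g i) s) ` {..<n})))
          = distr P borel \<eta>))"

definition exponent_measure :: "'w measure \<Rightarrow> ('w \<Rightarrow> ('t::metric_space \<Rightarrow>\<^sub>C real)) \<Rightarrow> ('t \<Rightarrow>\<^sub>C real) measure \<Rightarrow> bool" where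
  "exponent_measure P \<eta> \<mu> \<longleftrightarrow>
     sets \<mu> = sets C0M \<and> (\<forall>\<epsilon>>0. emeasure \<mu> {f\<in>C0. \<epsilon> < norm f} < \<infinity>) \<and>
     (\<forall>(n::nat) (K::nat \<Rightarrow> 't set) (x::nat \<Rightarrow> real). 1 \<le> n \<longrightarrow> (\<forall>i<n. compact (K i) \<and> K i \<noteq> {} \<and> 0 < x i) \<longrightarrow>
        (let U = (\<Union>i<n. {f\<in>C0. x i \<le> supK f (K i)}) in
         measure P {\<omega>\<in>space P. \<forall>i<n. supK (\<eta> \<omega>) (K i) < x i}
          = (if emeasure \<mu> U = \<infinity> then 0 else exp (- measure \<mu> U))))"

end

theory Submission
  imports Defs
begin

text \<open>Whether an atom \<open>\<phi>\<^sub>i\<close> goes to \<open>\<Phi>\<^sub>K\<^sup>+\<close> or to \<open>\<Phi>\<^sub>K\<^sup>-\<close> is decided by the event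
  \<open>\<phi>\<^sub>i <\<^sub>K \<eta>\<close>. For compact \<open>K\<close> with a countable dense subset \<open>D\<close>, continuity and
  compactness turn \<open>f <\<^sub>K g\<close> into \<open>\<exists>n. \<forall>s\<in>D. f s + 1/(n+1) \<le> g s\<close>, a countable
  combination of point evaluations, so these events are measurable. A thinning of the atoms
  by measurable events is a measurable point process: its mass on a Borel set \<open>A\<close> is the
  countable sum over \<open>i\<close> of the indicators of the events \<open>i \<le> N, \<phi>\<^sub>i \<in> A, i kept\<close>.\<close>

lemma compact_imp_countable_dense_subset:
  fixes K :: "'a::metric_space set"
  assumes "compact K"
  obtains D where "countable D" "D \<subseteq> K" "K \<subseteq> closure D"
proof -
  have "\<forall>n::nat. \<exists>F. finite F \<and> F \<subseteq> K \<and> K \<subseteq> (\<Union>x\<in>F. ball x (1 / real (Suc n)))"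
    using seq_compact_imp_totally_bounded[OF compact_imp_seq_compact[OF assms]] by simp
  then obtain F where F: "\<And>n. finite (F n)" "\<And>n. F n \<subseteq> K"
    "\<And>n. K \<subseteq> (\<Union>x\<in>F n. ball x (1 / real (Suc n)))"
    by metis
  define D where "D = (\<Union>n. F n)"
  have "s \<in> closure D" if "s \<in> K" for s
    unfolding closure_approachable
  proof (intro allI impI)
    fix e :: real
    assume "0 < e"
    then obtain n where n: "inverse (real (Suc n)) < e"
      using reals_Archimedean by blast
    obtain x where "x \<in> F n" "dist x s < 1 / real (Suc n)"
      using F(3) \<open>s \<in> K\<close> by fastforce
    moreover from this(2) n have "dist x s < e"
      by (simp add: inverse_eq_divide)
    ultimately show "\<exists>y\<in>D. dist y s < e"
      unfolding D_def by blast
  qed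
  moreover have "countable D" "D \<subseteq> K"
    using F(1,2) by (auto simp: D_def countable_finite)
  ultimately show ?thesis
    using that by blast
qed

lemma strictly_less_on_compact_imp_uniform_gap:
  fixes f g :: "'a::topological_space \<Rightarrow> real"
  assumes "compact K" "continuous_on K f" "continuous_on K g" "\<forall>s\<in>K. f s < g s"
  shows "\<exists>n::nat. \<forall>s\<in>K. f s + 1 / real (Suc n) \<le> g s"
proof (cases "K = {}")
  case False
  obtain x where "x \<in> K" and min: "\<And>y. y \<in> K \<Longrightarrow> g x - f x \<le> g y - f y"
    using continuous_attains_inf[OF assms(1) False continuous_on_diff[OF assms(3,2)]] by blast
  then have "0 < g x - f x"
    using assms(4) by simp
  then obtain n where n: "inverse (real (Suc n)) < g x - f x"
    using reals_Archimedean by blast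
  have "f s + 1 / real (Suc n) \<le> g s" if "s \<in> K" for s
    using min[OF that] n by (simp add: inverse_eq_divide)
  then show ?thesis by blast
qed simp

lemma le_on_closure:
  fixes f g :: "'a::topological_space \<Rightarrow> real"
  assumes "continuous_on UNIV f" "continuous_on UNIV g" "\<forall>s\<in>D. f s \<le> g s"
  shows "\<forall>s\<in>closure D. f s \<le> g s"
proof -
  have "closure D \<subseteq> {s. f s \<le> g s}"
    using assms by (intro closure_minimal closed_Collect_le) auto
  then show ?thesis by auto
qed

lemma strictly_less_on_compact_iff_gap_on_dense:
  fixes f g :: "'a::topological_space \<Rightarrow> real"
  assumes "continuous_on UNIV f" "continuous_on UNIV g" "compact K" "D \<subseteq> K" "K \<subseteq> closure D"
  shows "(\<forall>s\<in>K. f s < g s) \<longleftrightarrow> (\<exists>n::nat. \<forall>s\<in>D. f s + 1 / real (Suc n) \<le> g s)"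
proof
  assume "\<forall>s\<in>K. f s < g s"
  then show "\<exists>n::nat. \<forall>s\<in>D. f s + 1 / real (Suc n) \<le> g s"
    using strictly_less_on_compact_imp_uniform_gap[of K f g] assms continuous_on_subset[of UNIV]
    by blast
next
  assume "\<exists>n::nat. \<forall>s\<in>D. f s + 1 / real (Suc n) \<le> g s"
  then obtain n :: nat where "\<forall>s\<in>D. f s + 1 / real (Suc n) \<le> g s" ..
  then have "\<forall>s\<in>closure D. f s + 1 / real (Suc n) \<le> g s"
    using assms(1,2) by (intro le_on_closure continuous_intros)
  moreover have "0 < 1 / real (Suc n)" by simp
  ultimately show "\<forall>s\<in>K. f s < g s"
    using assms(5) by (smt (verit) subsetD)
qed

lemma continuous_on_bcontfun_apply:
  "continuous_on UNIV (\<lambda>f::'a::topological_space \<Rightarrow>\<^sub>C 'b::metric_space. apply_bcontfun f s)"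
  by (rule lipschitz_on_continuous_on[where L=1]) (simp add: lipschitz_onI dist_bounded)

lemma borel_measurable_bcontfun_apply[measurable]:
  "(\<lambda>f::'a::topological_space \<Rightarrow>\<^sub>C real. apply_bcontfun f s) \<in> borel_measurable borel"
  by (rule borel_measurable_continuous_onI[OF continuous_on_bcontfun_apply])

lemma pred_strictly_below_on_compact:
  fixes \<psi> \<eta> :: "'w \<Rightarrow> ('t::metric_space \<Rightarrow>\<^sub>C real)"
  assumes "compact K" and [measurable]: "\<psi> \<in> measurable P borel" "\<eta> \<in> measurable P borel"
  shows "Measurable.pred P (\<lambda>\<omega>. \<forall>s\<in>K. apply_bcontfun (\<psi> \<omega>) s < apply_bcontfun (\<eta> \<omega>) s)"
proof -
  obtain D where D: "countable D" "D \<subseteq> K" "K \<subseteq> closure D"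
    using compact_imp_countable_dense_subset[OF assms(1)] .
  have "{\<omega>\<in>space P. \<forall>s\<in>K. apply_bcontfun (\<psi> \<omega>) s < apply_bcontfun (\<eta> \<omega>) s}
      = {\<omega>\<in>space P. \<exists>n::nat. \<forall>s\<in>D. apply_bcontfun (\<psi> \<omega>) s + 1 / real (Suc n) \<le> apply_bcontfun (\<eta> \<omega>) s}"
    using strictly_less_on_compact_iff_gap_on_dense[OF continuous_on_apply_bcontfun
        continuous_on_apply_bcontfun assms(1) D(2,3)]
    by (intro Collect_cong) simp
  also have "\<dots> \<in> sets P"
    by (intro sets.sets_Collect_countable_Ex sets.sets_Collect_countable_All' D(1)) measurable
  finally show ?thesis
    unfolding Measurable.pred_def .
qed

lemma C0_borel: "C0 \<in> sets borel"
proof -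
  have "C0 = {f::'a::metric_space \<Rightarrow>\<^sub>C real. \<forall>s. 0 \<le> apply_bcontfun f s} - {0}"
    unfolding C0_def by auto
  also have "\<dots> \<in> sets borel"
    by (intro sets.Diff borel_closed closed_singleton closed_Collect_all closed_Collect_le
        continuous_on_const continuous_on_bcontfun_apply)
  finally show ?thesis .
qed

lemma sets_C0M_subset_borel: "sets C0M \<subseteq> sets (borel :: ('a::metric_space \<Rightarrow>\<^sub>C real) measure)"
  unfolding C0M_def using C0_borel sets_restrict_space_iff[of C0 borel] by auto

lemma pm_eq_suminf: "pm f I A = (\<Sum>i. indicator I i * indicator A (f i))"
proof -
  have "pm f I A = (\<integral>\<^sup>+ i. indicator A (f i) * indicator I i \<partial>count_space UNIV)"
    unfolding pm_def by (rule nn_integral_count_space_indicator) (simp add: NO_MATCH_def)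
  also have "\<dots> = (\<Sum>i. indicator I i * indicator A (f i))"
    by (simp add: nn_integral_count_space_nat mult.commute)
  finally show ?thesis .
qed

lemma pm_in_Mp_space:
  assumes "J \<subseteq> I" "\<forall>i\<in>I. f i \<in> C0" "\<forall>\<epsilon>>0. finite {i\<in>I. \<epsilon> < norm (f i)}"
  shows "pm f J \<in> Mp_space"
proof -
  have "finite {i\<in>J. \<epsilon> < norm (f i)}" if "\<epsilon> > 0" for \<epsilon>
  proof -
    have "finite {i\<in>I. \<epsilon> < norm (f i)}"
      using assms(3) that by blast
    then show ?thesis
      by (rule finite_subset[rotated]) (use assms(1) in auto)
  qed
  moreover have "\<forall>i\<in>J. f i \<in> C0"
    using assms(1,2) by auto
  ultimately show ?thesis
    unfolding Mp_space_def by auto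
qed

lemma measurable_MpI:
  fixes F :: "'a \<Rightarrow> ('t::metric_space \<Rightarrow>\<^sub>C real) set \<Rightarrow> ennreal"
  assumes "F \<in> space P \<rightarrow> Mp_space"
    and "\<And>A. A \<in> sets C0M \<Longrightarrow> (\<lambda>\<omega>. F \<omega> A) \<in> borel_measurable P"
  shows "F \<in> measurable P Mp"
  unfolding Mp_def
proof (rule measurable_measure_of)
  fix Y
  assume "Y \<in> {{M \<in> Mp_space. M A \<in> B} |A B.
    A \<in> sets (C0M :: ('t \<Rightarrow>\<^sub>C real) measure) \<and> B \<in> sets (borel :: ennreal measure)}"
  then obtain A B where "A \<in> sets C0M" "B \<in> sets borel" "Y = {M \<in> Mp_space. M A \<in> B}"
    by blast
  moreover have "F -` {M \<in> Mp_space. M A \<in> B} \<inter> space P = (\<lambda>\<omega>. F \<omega> A) -` B \<inter> space P" for A B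
    using assms(1) by auto
  ultimately show "F -` Y \<inter> space P \<in> sets P"
    using assms(2) by (simp add: measurable_sets)
qed (use assms(1) in auto)

lemma measurable_thinning:
  fixes \<phi> :: "nat \<Rightarrow> 'w \<Rightarrow> ('t::metric_space \<Rightarrow>\<^sub>C real)"
  assumes [measurable]: "N \<in> measurable P (count_space UNIV)" "\<And>i. \<phi> i \<in> measurable P borel"
    and "\<forall>\<omega>\<in>space P. \<forall>i\<in>idx (N \<omega>). \<phi> i \<omega> \<in> C0"
    and "\<forall>\<omega>\<in>space P. \<forall>\<epsilon>>0. finite {i\<in>idx (N \<omega>). \<epsilon> < norm (\<phi> i \<omega>)}"
    and [measurable]: "\<And>i. Measurable.pred P (C i)"
  shows "(\<lambda>\<omega>. pm (\<lambda>i. \<phi> i \<omega>) {i\<in>idx (N \<omega>). C i \<omega>}) \<in> measurable P Mp"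
proof (rule measurable_MpI)
  show "(\<lambda>\<omega>. pm (\<lambda>i. \<phi> i \<omega>) {i\<in>idx (N \<omega>). C i \<omega>}) \<in> space P \<rightarrow> Mp_space"
    using assms(3,4) by (auto intro: pm_in_Mp_space)
next
  fix A :: "('t \<Rightarrow>\<^sub>C real) set" assume "A \<in> sets C0M"
  then have [measurable]: "A \<in> sets borel" using sets_C0M_subset_borel by blast
  show "(\<lambda>\<omega>. pm (\<lambda>i. \<phi> i \<omega>) {i\<in>idx (N \<omega>). C i \<omega>} A) \<in> borel_measurable P"
    unfolding pm_eq_suminf by measurable
qed

theorem lemma3:
  fixes P :: "'w measure"
    and \<eta> :: "'w \<Rightarrow> ('t::metric_space \<Rightarrow>\<^sub>C real)"
    and \<mu> :: "('t \<Rightarrow>\<^sub>C real) measure"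
    and N :: "'w \<Rightarrow> enat"
    and \<phi> :: "nat \<Rightarrow> 'w \<Rightarrow> ('t \<Rightarrow>\<^sub>C real)"
    and K :: "'t set"
  assumes "compact (UNIV :: 't set)"
    and "prob_space P"
    and "\<eta> \<in> measurable P borel"
    and "max_id P \<eta>"
    and "\<forall>t. vertex P \<eta> t = 0"
    and "exponent_measure P \<eta> \<mu>"
    and "N \<in> measurable P (count_space UNIV)"
    and "\<forall>i. \<phi> i \<in> measurable P borel"
    and "poisson_random_measure P \<mu> N \<phi>"
    and "\<forall>\<omega>\<in>space P. \<forall>s. apply_bcontfun (\<eta> \<omega>) s = maxPhi \<phi> N \<omega> s"
    and "closed K"
  shows "(\<lambda>\<omega>. pm (\<lambda>i. \<phi> i \<omega>) {i\<in>idx (N \<omega>). \<not> (\<forall>s\<in>K. apply_bcontfun (\<phi> i \<omega>) s < apply_bcontfun (\<eta> \<omega>) s)})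
           \<in> measurable P Mp \<and>
         (\<lambda>\<omega>. pm (\<lambda>i. \<phi> i \<omega>) {i\<in>idx (N \<omega>). \<forall>s\<in>K. apply_bcontfun (\<phi> i \<omega>) s < apply_bcontfun (\<eta> \<omega>) s})
           \<in> measurable P Mp"
proof -
  have "compact K"
    using assms(1,11) compact_Int_closed[of UNIV K] by simp
  have atoms: "\<forall>\<omega>\<in>space P. \<forall>i\<in>idx (N \<omega>). \<phi> i \<omega> \<in> C0"
    and finite: "\<forall>\<omega>\<in>space P. \<forall>\<epsilon>>0. finite {i\<in>idx (N \<omega>). \<epsilon> < norm (\<phi> i \<omega>)}"
    using assms(9) unfolding poisson_random_measure_def by blast+
  have \<phi>: "\<And>i. \<phi> i \<in> measurable P borel"
    using assms(8) by blast
  note below = pred_strictly_below_on_compact[OF \<open>compact K\<close> \<phi> assms(3)]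
  show ?thesis
  proof
    show "(\<lambda>\<omega>. pm (\<lambda>i. \<phi> i \<omega>) {i\<in>idx (N \<omega>). \<not> (\<forall>s\<in>K. apply_bcontfun (\<phi> i \<omega>) s < apply_bcontfun (\<eta> \<omega>) s)})
        \<in> measurable P Mp"
      by (rule measurable_thinning[OF assms(7) \<phi> atoms finite pred_intros_logic(2)[OF below]])
    show "(\<lambda>\<omega>. pm (\<lambda>i. \<phi> i \<omega>) {i\<in>idx (N \<omega>). \<forall>s\<in>K. apply_bcontfun (\<phi> i \<omega>) s < apply_bcontfun (\<eta> \<omega>) s})
        \<in> measurable P Mp"
      by (rule measurable_thinning[OF assms(7) \<phi> atoms finite below])
  qed
qed

end
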